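(* Let $\Gamma_0$ be a torsion discrete abelian group, realized as a subgroup of $\bigoplus_{p} \bigl(\bigoplus_{j \in J_p} \mathcal{C}(p^\infty)\bigr)$ (direct sum over primes $p$, each $J_p$ an index set), and for each prime $p$ write $\Gamma^{(p)} := \bigoplus_{j \in J_p} \mathcal{C}(p^\infty)$. Let $N = p_1^{n_1}\cdots p_k^{n_k}$ with distinct primes $p_i$ and $n_i \in \mathbb{N}$, and let $E \subset \Gamma_0$ be $N$-PR. Then there exist subsets $E_i \subset \Gamma^{(p_i)}$ that are $p_i^{n_i}$-PR, $1 \le i \le k$, and bijections $f_i: E_1 \to E_i$ for $2 \le i \le k$, such that $$E = \{\gamma \oplus f_2(\gamma) \oplus \cdots \oplus f_k(\gamma) \oplus \beta_\gamma : \gamma \in E_1\}$$ for some elements $\beta_\gamma \in \bigoplus_{p \notin \{p_1,\dots,p_k\}} \Gamma^{(p)}$.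
   Context: $\mathcal{C}(p^\infty)$ denotes the group of all $p^m$-th roots of unity, $m \ge 1$. For a discrete abelian group $\Delta$ with compact dual $\widehat{\Delta}$ and $M \in \mathbb{N}$, a subset $E \subset \Delta$ is $M$-PR if for every function $\varphi: E \to \mathbb{Z}_M$ (the $M$-th roots of unity in the unit circle) there exists $x \in \widehat{\Delta}$ with $\varphi(\gamma) = \gamma(x)$ for all $\gamma \in E$. *)

theory Defs
  imports Complex_Main "HOL-Computational_Algebra.Primes"
begin

definition prufer :: "nat \<Rightarrow> complex set" where
  "prufer p = {z. \<exists>m\<ge>1. z ^ (p ^ m) = 1}"

definition roots_of_unity :: "nat \<Rightarrow> complex set" where
  "roots_of_unity M = {z. z ^ M = 1}"

text \<open>Elements are finitely supported families g (p,j), multiplicative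
  notation, identity the constant function 1; coordinates not of the form
  (prime p, j in J p) are fixed to 1.\<close>
definition big_group :: "(nat \<Rightarrow> 'j set) \<Rightarrow> (nat \<times> 'j \<Rightarrow> complex) set" where
  "big_group J = {g. (\<forall>p j. (prime p \<and> j \<in> J p \<longrightarrow> g (p, j) \<in> prufer p) \<and>
                          (\<not> (prime p \<and> j \<in> J p) \<longrightarrow> g (p, j) = 1))
                    \<and> finite {i. g i \<noteq> 1}}"

definition gmult :: "(nat \<times> 'j \<Rightarrow> complex) \<Rightarrow> (nat \<times> 'j \<Rightarrow> complex) \<Rightarrow> (nat \<times> 'j \<Rightarrow> complex)" where
  "gmult g h = (\<lambda>i. g i * h i)"

definition ginv :: "(nat \<times> 'j \<Rightarrow> complex) \<Rightarrow> (nat \<times> 'j \<Rightarrow> complex)" where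
  "ginv g = (\<lambda>i. inverse (g i))"

text \<open>Gamma^(p), embedded as the elements supported on the p-block.\<close>
definition prime_component :: "(nat \<Rightarrow> 'j set) \<Rightarrow> nat \<Rightarrow> (nat \<times> 'j \<Rightarrow> complex) set" where
  "prime_component J p = {g \<in> big_group J. \<forall>q j. q \<noteq> p \<longrightarrow> g (q, j) = 1}"

definition components_outside :: "(nat \<Rightarrow> 'j set) \<Rightarrow> nat set \<Rightarrow> (nat \<times> 'j \<Rightarrow> complex) set" where
  "components_outside J P = {g \<in> big_group J. \<forall>q\<in>P. \<forall>j. g (q, j) = 1}"

definition is_subgroup :: "(nat \<Rightarrow> 'j set) \<Rightarrow> (nat \<times> 'j \<Rightarrow> complex) set \<Rightarrow> bool" where
  "is_subgroup J D \<longleftrightarrow> D \<subseteq> big_group J \<and> (\<lambda>_. 1) \<in> D \<and>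
     (\<forall>g\<in>D. \<forall>h\<in>D. gmult g h \<in> D) \<and> (\<forall>g\<in>D. ginv g \<in> D)"

text \<open>The dual group of the discrete group D: all homomorphisms D -> unit circle
  (every such homomorphism is continuous, D being discrete).\<close>
definition characters :: "(nat \<times> 'j \<Rightarrow> complex) set \<Rightarrow> ((nat \<times> 'j \<Rightarrow> complex) \<Rightarrow> complex) set" where
  "characters D = {\<chi>. (\<forall>g\<in>D. cmod (\<chi> g) = 1) \<and> (\<forall>g\<in>D. \<forall>h\<in>D. \<chi> (gmult g h) = \<chi> g * \<chi> h)}"

definition PR :: "nat \<Rightarrow> (nat \<times> 'j \<Rightarrow> complex) set \<Rightarrow> (nat \<times> 'j \<Rightarrow> complex) set \<Rightarrow> bool" where
  "PR M D E \<longleftrightarrow> E \<subseteq> D \<and>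
     (\<forall>\<phi>. (\<forall>\<gamma>\<in>E. \<phi> \<gamma> \<in> roots_of_unity M) \<longrightarrow> (\<exists>\<chi>\<in>characters D. \<forall>\<gamma>\<in>E. \<phi> \<gamma> = \<chi> \<gamma>))"

end

theory Submission
  imports Defs
begin

(* Every character of the subgroup Gamma0 extends to the whole torsion group: partial
   characters can be extended one element at a time because the circle is divisible, and
   Zorn's lemma gives a total one. Hence E is N-PR in the big group. For a prime p, every
   gamma splits as its p-primary part times a part whose order is prime to p, so every
   character value chi gamma is a p-power root of unity times a root of unity of order
   prime to p. Interpolating a nontrivial p-th root of unity at gamma and 1 at gamma'
   shows that gamma |-> gamma_p is injective on E whenever p divides N; interpolating
   p^n-th roots of unity depending only on gamma_p shows that the p-primary parts of E
   form a p^n-PR set. Writing gamma as the product of its p_i-primary parts and the rest,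
   and parametrizing by the p_1-primary part, gives the statement. *)

abbreviation gone :: "nat \<times> 'j \<Rightarrow> complex" where
  "gone \<equiv> (\<lambda>_. 1)"

definition gpow :: "(nat \<times> 'j \<Rightarrow> complex) \<Rightarrow> nat \<Rightarrow> (nat \<times> 'j \<Rightarrow> complex)" where
  "gpow g a = (\<lambda>i. g i ^ a)"

lemma gpow_0 [simp]: "gpow g 0 = gone"
  by (simp add: gpow_def)

lemma gpow_Suc: "gpow g (Suc n) = gmult g (gpow g n)"
  by (simp add: gpow_def gmult_def)

lemma prufer_mult:
  assumes "z \<in> prufer p" "w \<in> prufer p"
  shows "z * w \<in> prufer p"
proof -
  obtain a b where a: "a \<ge> 1" "z ^ p ^ a = 1" and b: "w ^ p ^ b = 1"
    using assms unfolding prufer_def by auto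
  have "(z * w) ^ p ^ (a + b) = (z ^ p ^ a) ^ p ^ b * (w ^ p ^ b) ^ p ^ a"
    by (simp add: power_mult_distrib power_add power_mult[symmetric] mult.commute)
  with a b show ?thesis
    unfolding prufer_def by (intro CollectI exI[of _ "a + b"]) auto
qed

lemma big_group_coordinate:
  assumes "g \<in> big_group J" "g (q, j) \<noteq> 1"
  shows "prime q" "\<exists>m. g (q, j) ^ q ^ m = 1"
  using assms unfolding big_group_def prufer_def by auto

lemma big_group_nonzero: "g \<in> big_group J \<Longrightarrow> g x \<noteq> 0"
proof
  assume "g \<in> big_group J" "g x = 0"
  then obtain m where "prime (fst x)" "0 ^ fst x ^ m = (1::complex)"
    using big_group_coordinate[of g J "fst x" "snd x"] by auto
  then show False using prime_gt_0_nat by (simp add: power_0_left)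
qed

lemma big_group_one: "gone \<in> big_group J"
  unfolding big_group_def prufer_def by auto

lemma big_group_mult:
  assumes g: "g \<in> big_group J" and h: "h \<in> big_group J"
  shows "gmult g h \<in> big_group J"
proof -
  have "{i. g i * h i \<noteq> 1} \<subseteq> {i. g i \<noteq> 1} \<union> {i. h i \<noteq> 1}" by auto
  then have "finite {i. g i * h i \<noteq> 1}"
    using g h unfolding big_group_def by (auto intro: finite_subset)
  with g h show ?thesis
    unfolding big_group_def gmult_def by (auto simp: prufer_mult)
qed

lemma big_group_gpow: "g \<in> big_group J \<Longrightarrow> gpow g n \<in> big_group J"
  by (induction n) (auto simp: gpow_Suc big_group_one big_group_mult)

lemma big_group_restrict:
  assumes g: "g \<in> big_group J" and h: "\<And>x. h x = g x \<or> h x = 1"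
  shows "h \<in> big_group J"
proof -
  have "{x. h x \<noteq> 1} \<subseteq> {x. g x \<noteq> 1}" using h by (metis (mono_tags) mem_Collect_eq subsetI)
  then have "finite {x. h x \<noteq> 1}" using g unfolding big_group_def by (auto intro: finite_subset)
  moreover have "h (p, j) \<in> prufer p" if "prime p" "j \<in> J p" for p j
    using g h[of "(p, j)"] that unfolding big_group_def prufer_def by auto
  moreover have "h (p, j) = 1" if "\<not> (prime p \<and> j \<in> J p)" for p j
    using g h[of "(p, j)"] that unfolding big_group_def by auto
  ultimately show ?thesis unfolding big_group_def by blast
qed

lemma finite_support_common_exponent:
  fixes f :: "'a \<Rightarrow> 'b::monoid_mult"
  assumes fin: "finite {x. f x \<noteq> 1}"
    and exp: "\<And>x. f x \<noteq> 1 \<Longrightarrow> \<exists>e. Q e \<and> f x ^ e = 1"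
    and "Q 1" and Q_mult: "\<And>a b. Q a \<Longrightarrow> Q b \<Longrightarrow> Q (a * b)"
  shows "\<exists>e. Q e \<and> (\<forall>x. f x ^ e = 1)"
proof -
  have "\<exists>e. Q e \<and> (\<forall>x\<in>S. f x ^ e = 1)" if "finite S" "S \<subseteq> {x. f x \<noteq> 1}" for S
    using that
  proof (induction S rule: finite_induct)
    case (insert x S)
    obtain a where "Q a" "f x ^ a = 1" using exp insert.prems by auto
    moreover obtain b where "Q b" "\<forall>y\<in>S. f y ^ b = 1" using insert.IH insert.prems by auto
    ultimately have "Q (a * b) \<and> (\<forall>y\<in>insert x S. f y ^ (a * b) = 1)"
      using Q_mult by (auto simp: power_mult) (metis mult.commute power_mult power_one)
    then show ?case by blast
  qed (use \<open>Q 1\<close> in auto)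
  then obtain e where e: "Q e" "\<forall>x\<in>{x. f x \<noteq> 1}. f x ^ e = 1" using fin by blast
  have "f x ^ e = 1" for x by (cases "f x = 1") (use e in auto)
  with e show ?thesis by blast
qed

lemma big_group_torsion:
  assumes "g \<in> big_group J"
  obtains r where "r > 0" "gpow g r = gone"
proof -
  have "\<exists>e. e > 0 \<and> (\<forall>x. g x ^ e = 1)"
  proof (rule finite_support_common_exponent)
    show "finite {x. g x \<noteq> 1}" using assms unfolding big_group_def by auto
    show "\<exists>e. e > 0 \<and> g x ^ e = 1" if ne: "g x \<noteq> 1" for x
    proof -
      obtain q j where x: "x = (q, j)" by fastforce
      then obtain m where m: "prime q" "g x ^ q ^ m = 1"
        using big_group_coordinate[OF assms, of q j] ne by auto
      then show ?thesis using prime_gt_0_nat[of q] by (intro exI[of _ "q ^ m"]) auto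
    qed
  qed auto
  then show ?thesis using that by (auto simp: gpow_def fun_eq_iff)
qed

lemma gpow_pred_eq_ginv:
  assumes "g \<in> big_group J" "r > 0" "gpow g r = gone"
  shows "gpow g (r - 1) = ginv g"
proof
  fix x
  have "g x * g x ^ (r - 1) = g x ^ r"
    using assms(2) by (simp flip: power_Suc)
  also have "\<dots> = 1" using assms(3) unfolding gpow_def by (metis (mono_tags))
  finally have "g x * g x ^ (r - 1) = 1" .
  then show "gpow g (r - 1) x = ginv g x"
    unfolding gpow_def ginv_def by (metis inverse_unique)
qed

(* Graphs of characters on submonoids of the big group (subgroups, as the group is torsion),
   ordered by inclusion for Zorn's lemma. *)
definition partial_character :: "(nat \<Rightarrow> 'j set) \<Rightarrow> ((nat \<times> 'j \<Rightarrow> complex) \<times> complex) set \<Rightarrow> bool" where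
  "partial_character J R \<longleftrightarrow> fst ` R \<subseteq> big_group J \<and>
     (\<forall>x a b. (x, a) \<in> R \<longrightarrow> (x, b) \<in> R \<longrightarrow> a = b) \<and>
     (\<forall>x a y b. (x, a) \<in> R \<longrightarrow> (y, b) \<in> R \<longrightarrow> (gmult x y, a * b) \<in> R) \<and>
     (\<forall>x a. (x, a) \<in> R \<longrightarrow> cmod a = 1) \<and> (gone, 1) \<in> R"

lemma partial_character_domain: "partial_character J R \<Longrightarrow> (x, a) \<in> R \<Longrightarrow> x \<in> big_group J"
  unfolding partial_character_def by (metis fst_conv image_subset_iff)

lemma
  assumes "partial_character J R"
  shows partial_character_unique: "(x, a) \<in> R \<Longrightarrow> (x, b) \<in> R \<Longrightarrow> a = b"
    and partial_character_mult: "(x, a) \<in> R \<Longrightarrow> (y, b) \<in> R \<Longrightarrow> (gmult x y, a * b) \<in> R"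
    and partial_character_norm: "(x, a) \<in> R \<Longrightarrow> cmod a = 1"
    and partial_character_one: "(gone, 1) \<in> R"
  using assms unfolding partial_character_def by metis+

lemma partial_character_gpow:
  "partial_character J R \<Longrightarrow> (x, a) \<in> R \<Longrightarrow> (gpow x n, a ^ n) \<in> R"
  by (induction n) (auto simp: gpow_Suc partial_character_one partial_character_mult)

lemma partial_character_inverse:
  assumes R: "partial_character J R" and xa: "(x, a) \<in> R"
  shows "(ginv x, inverse a) \<in> R"
proof -
  have x: "x \<in> big_group J" using partial_character_domain[OF R xa] .
  obtain r where r: "r > 0" "gpow x r = gone" using big_group_torsion[OF x] .
  have "(gone, a ^ r) \<in> R" using partial_character_gpow[OF R xa, of r] r(2) by simp
  then have "a ^ r = 1" using partial_character_unique[OF R _ partial_character_one[OF R]] by blast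
  then have "a ^ (r - 1) = inverse a"
    using r(1) by (metis Suc_pred' inverse_unique power_Suc)
  then show ?thesis
    using partial_character_gpow[OF R xa, of "r - 1"] gpow_pred_eq_ginv[OF x r] by simp
qed

lemma partial_character_compatible_root:
  assumes R: "partial_character J R" and g: "g \<in> big_group J"
  obtains w where "cmod w = 1" "\<And>s v. (gpow g s, v) \<in> R \<Longrightarrow> v = w ^ s"
proof -
  obtain r where r: "r > 0" "gpow g r = gone" using big_group_torsion[OF g] .
  define m where "m = (LEAST m. 0 < m \<and> gpow g m \<in> fst ` R)"
  have "gpow g r \<in> fst ` R" using r(2) partial_character_one[OF R] by (metis fst_conv image_eqI)
  with r(1) have "\<exists>m. 0 < m \<and> gpow g m \<in> fst ` R" by blast
  then have "0 < m \<and> gpow g m \<in> fst ` R"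
    unfolding m_def by (rule LeastI_ex)
  then obtain c where m: "0 < m" and c: "(gpow g m, c) \<in> R" by force
  have m_least: "m \<le> s" if "0 < s" "gpow g s \<in> fst ` R" for s
    unfolding m_def using that by (intro Least_le) simp
  have c_norm: "cmod c = 1" using partial_character_norm[OF R c] .
  then have c_nonzero: "c \<noteq> 0" by auto
  (* Any m-th root of c is compatible: by minimality of m, the induction below reduces
     every s with g^s in the domain to s - m. *)
  define w where "w = cis (Arg c / m)"
  have w_norm: "cmod w = 1" unfolding w_def by simp
  have w_m: "w ^ m = c"
    unfolding w_def DeMoivre using m c_norm cis_Arg[OF c_nonzero] by (simp add: sgn_div_norm)
  have "v = w ^ s" if "(gpow g s, v) \<in> R" for s v
    using that
  proof (induction s arbitrary: v rule: less_induct)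
    case (less s)
    show ?case
    proof (cases "s = 0")
      case True
      then have "(gone, v) \<in> R" using less.prems by simp
      then show ?thesis using partial_character_unique[OF R _ partial_character_one[OF R]] True by simp
    next
      case False
      then have "m \<le> s" using m_least less.prems by (metis fst_conv image_eqI neq0_conv)
      have "gmult (ginv (gpow g m)) (gpow g s) = gpow g (s - m)"
        using big_group_nonzero[OF g] \<open>m \<le> s\<close>
        by (auto simp: gmult_def ginv_def gpow_def power_diff field_simps)
      then have "(gpow g (s - m), inverse c * v) \<in> R"
        using partial_character_mult[OF R partial_character_inverse[OF R c] less.prems] by simp
      then have "inverse c * v = w ^ (s - m)" using less.IH m False by simp
      then have "v = c * w ^ (s - m)" using c_nonzero by (auto simp: field_simps)
      also have "\<dots> = w ^ s" using \<open>m \<le> s\<close> by (simp flip: w_m power_add)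
      finally show "v = w ^ s" .
    qed
  qed
  with w_norm that show ?thesis by blast
qed

lemma partial_character_adjoin:
  assumes R: "partial_character J R" and g: "g \<in> big_group J"
    and w_norm: "cmod w = 1" and w_compatible: "\<And>s v. (gpow g s, v) \<in> R \<Longrightarrow> v = w ^ s"
  shows "partial_character J {(gmult d (gpow g a), c * w ^ a) | d c a. (d, c) \<in> R}"
    (is "partial_character J ?R'")
proof -
  have well_defined: "c * w ^ a = c' * w ^ b"
    if dc: "(d, c) \<in> R" and dc': "(d', c') \<in> R"
      and eq: "gmult d (gpow g a) = gmult d' (gpow g b)" and "b \<le> a" for d c a d' c' b
  proof -
    have "gmult (ginv d) d' = gpow g (a - b)"
    proof
      fix x
      have "d x * g x ^ a = d' x * g x ^ b" using eq unfolding gmult_def gpow_def by metis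
      then show "gmult (ginv d) d' x = gpow g (a - b) x"
        using big_group_nonzero[OF g, of x] big_group_nonzero[OF partial_character_domain[OF R dc], of x]
          \<open>b \<le> a\<close> by (auto simp: gmult_def ginv_def gpow_def power_diff field_simps)
    qed
    then have "(gpow g (a - b), inverse c * c') \<in> R"
      using partial_character_mult[OF R partial_character_inverse[OF R dc] dc'] by simp
    then have "c' = c * w ^ (a - b)"
      using w_compatible partial_character_norm[OF R dc] by (force simp: field_simps)
    then show ?thesis using \<open>b \<le> a\<close> by (simp add: mult.assoc flip: power_add)
  qed
  show ?thesis
    unfolding partial_character_def
  proof (intro conjI allI impI)
    show "fst ` ?R' \<subseteq> big_group J"
      using partial_character_domain[OF R] g by (auto intro!: big_group_mult big_group_gpow)
  next
    fix x a b assume "(x, a) \<in> ?R'" "(x, b) \<in> ?R'"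
    then obtain d c e d' c' e' where
      1: "(d, c) \<in> R" "x = gmult d (gpow g e)" "a = c * w ^ e" and
      2: "(d', c') \<in> R" "x = gmult d' (gpow g e')" "b = c' * w ^ e'"
      by blast
    show "a = b"
    proof (cases "e' \<le> e")
      case True
      then show ?thesis using well_defined[OF 1(1) 2(1)] 1 2 by simp
    next
      case False
      then show ?thesis using well_defined[OF 2(1) 1(1)] 1 2 by simp
    qed
  next
    fix x a y b assume "(x, a) \<in> ?R'" "(y, b) \<in> ?R'"
    then obtain d c e d' c' e' where
      1: "(d, c) \<in> R" "x = gmult d (gpow g e)" "a = c * w ^ e" and
      2: "(d', c') \<in> R" "y = gmult d' (gpow g e')" "b = c' * w ^ e'"
      by blast
    have "gmult x y = gmult (gmult d d') (gpow g (e + e'))"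
      using 1 2 by (auto simp: gmult_def gpow_def power_add mult_ac)
    moreover have "a * b = (c * c') * w ^ (e + e')"
      using 1 2 by (simp add: power_add mult_ac)
    ultimately show "(gmult x y, a * b) \<in> ?R'"
      using partial_character_mult[OF R 1(1) 2(1)] by blast
  next
    fix x a assume "(x, a) \<in> ?R'"
    then obtain d c e where "(d, c) \<in> R" "a = c * w ^ e" by blast
    then show "cmod a = 1"
      using partial_character_norm[OF R] w_norm by (simp add: norm_mult norm_power)
  next
    have "(gone, 1) = (gmult gone (gpow g 0), 1 * w ^ 0)" by (simp add: gmult_def)
    then show "(gone, 1) \<in> ?R'" using partial_character_one[OF R] by blast
  qed
qed

lemma partial_character_extend:
  assumes R: "partial_character J R" and g: "g \<in> big_group J"
  obtains R' where "partial_character J R'" "R \<subseteq> R'" "g \<in> fst ` R'"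
proof -
  obtain w where w: "cmod w = 1" "\<And>s v. (gpow g s, v) \<in> R \<Longrightarrow> v = w ^ s"
    using partial_character_compatible_root[OF R g] by metis
  define R' where "R' = {(gmult d (gpow g a), c * w ^ a) | d c a. (d, c) \<in> R}"
  have "partial_character J R'"
    unfolding R'_def using partial_character_adjoin[OF R g w] .
  moreover have "(d, c) \<in> R'" if "(d, c) \<in> R" for d c
  proof -
    have "(d, c) = (gmult d (gpow g 0), c * w ^ 0)" by (simp add: gmult_def)
    then show ?thesis unfolding R'_def using that by blast
  qed
  moreover have "(g, w) \<in> R'"
  proof -
    have "(g, w) = (gmult gone (gpow g 1), 1 * w ^ 1)" by (simp add: gmult_def gpow_def)
    then show ?thesis unfolding R'_def using partial_character_one[OF R] by blast
  qed
  ultimately show ?thesis using that by force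
qed

lemma partial_character_chain_Union:
  assumes "C \<noteq> {}" and R: "\<And>R. R \<in> C \<Longrightarrow> partial_character J R"
    and chain: "\<forall>R\<in>C. \<forall>S\<in>C. R \<subseteq> S \<or> S \<subseteq> R"
  shows "partial_character J (\<Union>C)"
proof -
  have common: "\<exists>R\<in>C. u \<in> R \<and> v \<in> R" if "u \<in> \<Union>C" "v \<in> \<Union>C" for u v
    using that chain by blast
  show ?thesis
    unfolding partial_character_def
  proof (intro conjI allI impI)
    show "fst ` \<Union>C \<subseteq> big_group J" using partial_character_domain[OF R] by force
  next
    fix x a b assume "(x, a) \<in> \<Union>C" "(x, b) \<in> \<Union>C"
    with common obtain R where "R \<in> C" "(x, a) \<in> R" "(x, b) \<in> R" by blast
    then show "a = b" using partial_character_unique[OF R] by blast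
  next
    fix x a y b assume "(x, a) \<in> \<Union>C" "(y, b) \<in> \<Union>C"
    with common obtain R where "R \<in> C" "(x, a) \<in> R" "(y, b) \<in> R" by blast
    then show "(gmult x y, a * b) \<in> \<Union>C" using partial_character_mult[OF R] by blast
  next
    fix x a assume "(x, a) \<in> \<Union>C"
    then show "cmod a = 1" using partial_character_norm[OF R] by blast
  next
    show "(gone, 1) \<in> \<Union>C" using \<open>C \<noteq> {}\<close> partial_character_one[OF R] by blast
  qed
qed

lemma character_nonzero: "\<chi> \<in> characters D \<Longrightarrow> g \<in> D \<Longrightarrow> \<chi> g \<noteq> 0"
  unfolding characters_def by fastforce

lemma character_one:
  assumes "gone \<in> D" "\<chi> \<in> characters D"
  shows "\<chi> gone = 1"
proof -
  have "\<chi> (gmult gone gone) = \<chi> gone * \<chi> gone"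
    using assms unfolding characters_def by blast
  then have "\<chi> gone = \<chi> gone * \<chi> gone" by (simp add: gmult_def)
  moreover have "\<chi> gone \<noteq> 0" using character_nonzero[OF assms(2,1)] .
  ultimately show ?thesis by simp
qed

lemma character_graph_partial_character:
  assumes H: "H \<subseteq> big_group J" "gone \<in> H" "\<And>g h. g \<in> H \<Longrightarrow> h \<in> H \<Longrightarrow> gmult g h \<in> H"
    and \<chi>: "\<chi> \<in> characters H"
  shows "partial_character J ((\<lambda>h. (h, \<chi> h)) ` H)"
  unfolding partial_character_def
proof (intro conjI allI impI)
  show "fst ` (\<lambda>h. (h, \<chi> h)) ` H \<subseteq> big_group J" using H(1) by auto
next
  fix x a y b assume "(x, a) \<in> (\<lambda>h. (h, \<chi> h)) ` H" "(y, b) \<in> (\<lambda>h. (h, \<chi> h)) ` H"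
  then have "x \<in> H" "y \<in> H" "a = \<chi> x" "b = \<chi> y" by auto
  moreover from calculation have "\<chi> (gmult x y) = \<chi> x * \<chi> y"
    using \<chi> unfolding characters_def by blast
  ultimately show "(gmult x y, a * b) \<in> (\<lambda>h. (h, \<chi> h)) ` H" using H(3) by force
next
  show "(gone, 1) \<in> (\<lambda>h. (h, \<chi> h)) ` H" using H(2) character_one[OF H(2) \<chi>] by force
qed (use \<chi> in \<open>auto simp: characters_def\<close>)

lemma total_partial_character_character:
  assumes R: "partial_character J R" and total: "big_group J \<subseteq> fst ` R"
  shows "\<exists>\<chi>\<in>characters (big_group J). \<forall>x a. (x, a) \<in> R \<longrightarrow> \<chi> x = a"
proof -
  define \<chi> where "\<chi> x = (THE a. (x, a) \<in> R)" for x
  have graph: "(x, a) \<in> R \<Longrightarrow> \<chi> x = a" for x a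
    unfolding \<chi>_def using partial_character_unique[OF R] by blast
  have in_graph: "(x, \<chi> x) \<in> R" if "x \<in> big_group J" for x
    using that total graph by force
  have "\<chi> \<in> characters (big_group J)"
    unfolding characters_def
  proof (intro CollectI conjI ballI)
    fix g h assume "g \<in> big_group J" "h \<in> big_group J"
    then show "\<chi> (gmult g h) = \<chi> g * \<chi> h"
      using partial_character_mult[OF R in_graph in_graph] graph by metis
  qed (use in_graph partial_character_norm[OF R] in blast)
  with graph show ?thesis by blast
qed

lemma characters_extend:
  assumes H: "H \<subseteq> big_group J" "gone \<in> H" "\<And>g h. g \<in> H \<Longrightarrow> h \<in> H \<Longrightarrow> gmult g h \<in> H"
    and \<chi>: "\<chi> \<in> characters H"
  shows "\<exists>\<chi>'\<in>characters (big_group J). \<forall>h\<in>H. \<chi>' h = \<chi> h"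
proof -
  define A where "A = {R. partial_character J R \<and> (\<lambda>h. (h, \<chi> h)) ` H \<subseteq> R}"
  have "\<exists>M\<in>A. \<forall>X\<in>A. M \<subseteq> X \<longrightarrow> X = M"
  proof (rule subset_Zorn_nonempty)
    show "A \<noteq> {}" unfolding A_def using character_graph_partial_character[OF H \<chi>] by blast
    show "\<Union>C \<in> A" if "C \<noteq> {}" "subset.chain A C" for C
      using that partial_character_chain_Union[of C J] unfolding A_def subset_chain_def by blast
  qed
  then obtain M where "M \<in> A" and M_maximal: "\<And>X. X \<in> A \<Longrightarrow> M \<subseteq> X \<Longrightarrow> X = M"
    by blast
  then have M: "partial_character J M" "(\<lambda>h. (h, \<chi> h)) ` H \<subseteq> M"
    unfolding A_def by auto
  have "big_group J \<subseteq> fst ` M"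
  proof
    fix g assume "g \<in> big_group J"
    then obtain R' where R': "partial_character J R'" "M \<subseteq> R'" "g \<in> fst ` R'"
      using partial_character_extend[OF M(1)] by metis
    then have "R' \<in> A" using M(2) unfolding A_def by auto
    then have "R' = M" using M_maximal R'(2) by simp
    with R'(3) show "g \<in> fst ` M" by simp
  qed
  then obtain \<chi>' where "\<chi>' \<in> characters (big_group J)" "\<forall>x a. (x, a) \<in> M \<longrightarrow> \<chi>' x = a"
    using total_partial_character_character[OF M(1)] by blast
  with M(2) show ?thesis by (metis image_subset_iff)
qed

lemma PR_obtain_character:
  assumes "PR M D E" "\<forall>\<gamma>\<in>E. \<phi> \<gamma> \<in> roots_of_unity M"
  obtains \<chi> where "\<chi> \<in> characters D" "\<forall>\<gamma>\<in>E. \<phi> \<gamma> = \<chi> \<gamma>"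
  using assms unfolding PR_def by blast

lemma PR_dvd:
  assumes "M dvd N" "PR N D E"
  shows "PR M D E"
proof -
  have "roots_of_unity M \<subseteq> roots_of_unity N"
    using assms(1) unfolding roots_of_unity_def by (auto simp: dvd_def power_mult)
  with assms(2) show ?thesis unfolding PR_def by blast
qed

lemma PR_big_group:
  assumes "is_subgroup J \<Gamma>0" "PR N \<Gamma>0 E"
  shows "PR N (big_group J) E"
  unfolding PR_def
proof (intro conjI allI impI)
  show "E \<subseteq> big_group J" using assms unfolding is_subgroup_def PR_def by blast
next
  fix \<phi> assume "\<forall>\<gamma>\<in>E. \<phi> \<gamma> \<in> roots_of_unity N"
  then obtain \<chi> where \<chi>: "\<chi> \<in> characters \<Gamma>0" "\<forall>\<gamma>\<in>E. \<phi> \<gamma> = \<chi> \<gamma>"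
    by (rule PR_obtain_character[OF assms(2)])
  obtain \<chi>' where "\<chi>' \<in> characters (big_group J)" "\<forall>h\<in>\<Gamma>0. \<chi>' h = \<chi> h"
    using characters_extend[OF _ _ _ \<chi>(1)] assms(1) unfolding is_subgroup_def by blast
  with \<chi>(2) assms(2) show "\<exists>\<chi>\<in>characters (big_group J). \<forall>\<gamma>\<in>E. \<phi> \<gamma> = \<chi> \<gamma>"
    unfolding PR_def by (metis subsetD)
qed

definition primary_part :: "nat \<Rightarrow> (nat \<times> 'j \<Rightarrow> complex) \<Rightarrow> (nat \<times> 'j \<Rightarrow> complex)" where
  "primary_part p g = (\<lambda>x. if fst x = p then g x else 1)"

definition part_outside :: "nat set \<Rightarrow> (nat \<times> 'j \<Rightarrow> complex) \<Rightarrow> (nat \<times> 'j \<Rightarrow> complex)" where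
  "part_outside P g = (\<lambda>x. if fst x \<in> P then 1 else g x)"

lemma primary_part_big_group: "g \<in> big_group J \<Longrightarrow> primary_part p g \<in> big_group J"
  by (rule big_group_restrict) (auto simp: primary_part_def)

lemma part_outside_big_group: "g \<in> big_group J \<Longrightarrow> part_outside P g \<in> big_group J"
  by (rule big_group_restrict) (auto simp: part_outside_def)

lemma primary_part_prime_component: "g \<in> big_group J \<Longrightarrow> primary_part p g \<in> prime_component J p"
  unfolding prime_component_def by (simp add: primary_part_big_group) (simp add: primary_part_def)

lemma part_outside_components_outside:
  "g \<in> big_group J \<Longrightarrow> part_outside P g \<in> components_outside J P"
  unfolding components_outside_def by (simp add: part_outside_big_group) (simp add: part_outside_def)

lemma primary_part_exponent:
  assumes g: "g \<in> big_group J"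
  obtains e where "gpow (primary_part p g) (p ^ e) = gone"
proof -
  have "\<exists>e. (\<exists>m. e = p ^ m) \<and> (\<forall>x. primary_part p g x ^ e = 1)"
  proof (rule finite_support_common_exponent)
    show "finite {x. primary_part p g x \<noteq> 1}"
      using primary_part_big_group[OF g] unfolding big_group_def by blast
    show "\<exists>e. (\<exists>m. e = p ^ m) \<and> primary_part p g x ^ e = 1" if ne: "primary_part p g x \<noteq> 1" for x
    proof -
      obtain j where x: "x = (p, j)" "g (p, j) \<noteq> 1"
        using ne by (cases x) (auto simp: primary_part_def split: if_splits)
      then obtain m where "g (p, j) ^ p ^ m = 1" using big_group_coordinate[OF g] by blast
      then show ?thesis using x by (auto simp: primary_part_def)
    qed
  qed (metis power_0, metis power_add)
  then show ?thesis using that by (auto simp: gpow_def fun_eq_iff)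
qed

lemma part_outside_exponent:
  assumes g: "g \<in> big_group J" and p: "prime p"
  obtains M where "coprime M p" "gpow (part_outside {p} g) M = gone"
proof -
  have "\<exists>M. coprime M p \<and> (\<forall>x. part_outside {p} g x ^ M = 1)"
  proof (rule finite_support_common_exponent)
    show "finite {x. part_outside {p} g x \<noteq> 1}"
      using part_outside_big_group[OF g] unfolding big_group_def by blast
    show "\<exists>M. coprime M p \<and> part_outside {p} g x ^ M = 1" if ne: "part_outside {p} g x \<noteq> 1" for x
    proof -
      obtain q j where x: "x = (q, j)" "q \<noteq> p" "g (q, j) \<noteq> 1"
        using ne by (cases x) (auto simp: part_outside_def split: if_splits)
      then obtain m where "prime q" "g (q, j) ^ q ^ m = 1" using big_group_coordinate[OF g] by blast
      moreover have "coprime (q ^ m) p"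
        using \<open>prime q\<close> p \<open>q \<noteq> p\<close> by (simp add: primes_coprime)
      ultimately show ?thesis using x by (intro exI[of _ "q ^ m"]) (auto simp: part_outside_def)
    qed
  qed auto
  then show ?thesis using that by (auto simp: gpow_def fun_eq_iff)
qed

lemma character_gpow:
  assumes "\<chi> \<in> characters (big_group J)" "g \<in> big_group J"
  shows "\<chi> (gpow g n) = \<chi> g ^ n"
proof (induction n)
  case 0
  then show ?case using character_one[OF big_group_one assms(1)] by simp
next
  case (Suc n)
  then show ?case
    using assms big_group_gpow[OF assms(2), of n] unfolding characters_def by (simp add: gpow_Suc)
qed

lemma character_root_of_unity:
  assumes "\<chi> \<in> characters (big_group J)" "g \<in> big_group J" "gpow g n = gone"
  shows "\<chi> g ^ n = 1"
  using character_gpow[OF assms(1,2), of n] character_one[OF big_group_one assms(1)] assms(3) by simp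

lemma character_primary_factorization:
  assumes "\<chi> \<in> characters (big_group J)" "g \<in> big_group J"
  shows "\<chi> g = \<chi> (primary_part p g) * \<chi> (part_outside {p} g)"
proof -
  have "gmult (primary_part p g) (part_outside {p} g) = g"
    by (auto simp: gmult_def primary_part_def part_outside_def)
  moreover have "\<chi> (gmult (primary_part p g) (part_outside {p} g)) =
      \<chi> (primary_part p g) * \<chi> (part_outside {p} g)"
    using assms(1) primary_part_big_group[OF assms(2)] part_outside_big_group[OF assms(2)]
    unfolding characters_def by blast
  ultimately show ?thesis by simp
qed

lemma root_of_unity_coprime_orders:
  fixes z :: "'a::monoid_mult"
  assumes "z ^ a = 1" "z ^ b = 1" "coprime a b"
  shows "z = 1"
proof (cases "a = 0")
  case True
  with assms show ?thesis by simp
next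
  case False
  then obtain x y where "a * x = Suc (b * y)" using bezout_nat[of a b] assms(3) by auto
  then have "z ^ (a * x) = z ^ (b * y) * z" by (simp only: power_Suc2)
  with assms(1,2) show ?thesis by (simp add: power_mult)
qed

lemma exists_nontrivial_root_of_unity:
  assumes "2 \<le> q"
  obtains z :: complex where "z \<noteq> 1" "z ^ q = 1"
proof -
  have "{z::complex. z ^ q = 1} \<noteq> {1}"
    using card_roots_unity_eq[of q] assms by auto
  moreover have "1 \<in> {z::complex. z ^ q = 1}" by simp
  ultimately show ?thesis using that by blast
qed

lemma PR_inj_on_primary_part:
  assumes PR: "PR p (big_group J) E" and p: "prime p"
  shows "inj_on (primary_part p) E"
proof (rule inj_onI, rule ccontr)
  fix \<gamma> \<gamma>' assume \<gamma>: "\<gamma> \<in> E" "\<gamma>' \<in> E" "primary_part p \<gamma> = primary_part p \<gamma>'" "\<gamma> \<noteq> \<gamma>'"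
  have E: "E \<subseteq> big_group J" using PR unfolding PR_def by blast
  obtain \<zeta> :: complex where \<zeta>: "\<zeta> \<noteq> 1" "\<zeta> ^ p = 1"
    using exists_nontrivial_root_of_unity prime_ge_2_nat[OF p] by metis
  define \<phi> where "\<phi> x = (if x = \<gamma> then \<zeta> else 1)" for x
  have "\<forall>x\<in>E. \<phi> x \<in> roots_of_unity p" using \<zeta>(2) unfolding \<phi>_def roots_of_unity_def by auto
  then obtain \<chi> where \<chi>: "\<chi> \<in> characters (big_group J)" "\<forall>x\<in>E. \<phi> x = \<chi> x"
    by (rule PR_obtain_character[OF PR])
  define c where "c = \<chi> (primary_part p \<gamma>)"
  define u where "u = \<chi> (part_outside {p} \<gamma>)"
  define u' where "u' = \<chi> (part_outside {p} \<gamma>')"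
  have "\<zeta> = c * u" "1 = c * u'"
    using \<chi> \<gamma> E character_primary_factorization[OF \<chi>(1), of _ p]
    unfolding \<phi>_def c_def u_def u'_def by (metis subsetD)+
  then have "\<zeta> = u * inverse u'" by (metis inverse_unique mult.commute)
  obtain M M' where M: "coprime M p" "u ^ M = 1" and M': "coprime M' p" "u' ^ M' = 1"
    using part_outside_exponent[OF _ p] character_root_of_unity[OF \<chi>(1) part_outside_big_group]
      \<gamma>(1,2) E unfolding u_def u'_def by (metis subsetD)
  have "\<zeta> ^ (M * M') = (u ^ M) ^ M' * inverse ((u' ^ M') ^ M)"
    using \<open>\<zeta> = u * inverse u'\<close>
    by (simp add: power_mult_distrib power_inverse mult.commute flip: power_mult)
  also have "\<dots> = 1" using M M' by simp
  finally have "\<zeta> = 1"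
    using root_of_unity_coprime_orders[OF _ \<zeta>(2)] M(1) M'(1) by simp
  with \<zeta>(1) show False ..
qed

lemma PR_primary_part_image:
  assumes PR: "PR (p ^ n) (big_group J) E" and p: "prime p"
  shows "PR (p ^ n) (prime_component J p) (primary_part p ` E)"
  unfolding PR_def
proof (intro conjI allI impI)
  have E: "E \<subseteq> big_group J" using PR unfolding PR_def by blast
  then show "primary_part p ` E \<subseteq> prime_component J p"
    using primary_part_prime_component by blast
  fix \<psi> assume \<psi>: "\<forall>\<gamma>\<in>primary_part p ` E. \<psi> \<gamma> \<in> roots_of_unity (p ^ n)"
  then have "\<forall>\<gamma>\<in>E. \<psi> (primary_part p \<gamma>) \<in> roots_of_unity (p ^ n)" by blast
  then obtain \<chi> where \<chi>: "\<chi> \<in> characters (big_group J)" "\<forall>\<gamma>\<in>E. \<psi> (primary_part p \<gamma>) = \<chi> \<gamma>"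
    by (rule PR_obtain_character[OF PR])
  have "\<psi> (primary_part p \<gamma>) = \<chi> (primary_part p \<gamma>)" if "\<gamma> \<in> E" for \<gamma>
  proof -
    define c where "c = \<chi> (primary_part p \<gamma>)"
    define u where "u = \<chi> (part_outside {p} \<gamma>)"
    have \<gamma>: "\<gamma> \<in> big_group J" using E that by blast
    have "c \<noteq> 0"
      unfolding c_def using character_nonzero[OF \<chi>(1) primary_part_big_group[OF \<gamma>]] .
    obtain e where e: "c ^ p ^ e = 1"
      using primary_part_exponent[OF \<gamma>] character_root_of_unity[OF \<chi>(1) primary_part_big_group[OF \<gamma>]]
      unfolding c_def by metis
    obtain M where M: "coprime M p" "u ^ M = 1"
      using part_outside_exponent[OF \<gamma> p] character_root_of_unity[OF \<chi>(1) part_outside_big_group[OF \<gamma>]]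
      unfolding u_def by metis
    have \<psi>_root: "\<psi> (primary_part p \<gamma>) ^ p ^ n = 1"
      using \<psi> that unfolding roots_of_unity_def by blast
    have "\<psi> (primary_part p \<gamma>) = c * u"
      using \<chi> that character_primary_factorization[OF \<chi>(1) \<gamma>] unfolding c_def u_def by simp
    then have u_eq: "u = \<psi> (primary_part p \<gamma>) * inverse c" using \<open>c \<noteq> 0\<close> by (simp add: field_simps)
    have "u ^ p ^ (n + e) = (\<psi> (primary_part p \<gamma>) ^ p ^ n) ^ p ^ e * inverse ((c ^ p ^ e) ^ p ^ n)"
      unfolding u_eq by (simp add: power_mult_distrib power_inverse power_add mult.commute flip: power_mult)
    also have "\<dots> = 1" using \<psi>_root e by simp
    finally have "u = 1"
      using root_of_unity_coprime_orders[OF M(2)] M(1) by (simp add: coprime_commute)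
    then show ?thesis using \<open>\<psi> (primary_part p \<gamma>) = c * u\<close> unfolding c_def by simp
  qed
  moreover have "\<chi> \<in> characters (prime_component J p)"
    using \<chi>(1) unfolding characters_def prime_component_def by blast
  ultimately show "\<exists>\<chi>\<in>characters (prime_component J p). \<forall>\<gamma>\<in>primary_part p ` E. \<psi> \<gamma> = \<chi> \<gamma>"
    by blast
qed

lemma prod_primary_part:
  assumes "finite I" "inj_on p I"
  shows "(\<Prod>i\<in>I. primary_part (p i) g x) = (if fst x \<in> p ` I then g x else 1)"
proof (cases "fst x \<in> p ` I")
  case True
  then obtain i0 where i0: "i0 \<in> I" "fst x = p i0" by blast
  have "(\<Prod>i\<in>I. primary_part (p i) g x) = (\<Prod>i\<in>I. if i = i0 then g x else 1)"
    using inj_onD[OF assms(2) _ _ i0(1)] i0(2) by (intro prod.cong) (auto simp: primary_part_def)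
  also have "\<dots> = g x" using prod.delta[OF assms(1), of i0 "\<lambda>_. g x"] i0(1) by simp
  finally show ?thesis using True by simp
next
  case False
  then show ?thesis by (auto simp: primary_part_def intro!: prod.neutral)
qed

lemma primary_parts_decomposition:
  fixes p :: "nat \<Rightarrow> nat" and k :: nat
  assumes "inj_on p {1..k}" "1 \<le> k"
  shows "primary_part (p 1) g x * (\<Prod>i\<in>{2..k}. primary_part (p i) g x) * part_outside (p ` {1..k}) g x
    = g x"
proof -
  have "{1..k} = insert 1 {2..k}" using assms(2) by auto
  then have "primary_part (p 1) g x * (\<Prod>i\<in>{2..k}. primary_part (p i) g x)
      = (\<Prod>i\<in>{1..k}. primary_part (p i) g x)"
    by simp
  then show ?thesis
    using prod_primary_part[OF _ assms(1), of g x] by (simp add: part_outside_def)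
qed

lemma parametrize_by_first_primary_part:
  fixes p :: "nat \<Rightarrow> nat" and k :: nat
  assumes E: "E \<subseteq> big_group J" and p: "inj_on p {1..k}" and k: "1 \<le> k"
    and inj: "\<forall>i\<in>{1..k}. inj_on (primary_part (p i)) E"
  obtains f \<beta> where
    "\<forall>i\<in>{2..k}. bij_betw (f i) (primary_part (p 1) ` E) (primary_part (p i) ` E)"
    "\<forall>\<gamma>\<in>primary_part (p 1) ` E. \<beta> \<gamma> \<in> components_outside J (p ` {1..k})"
    "E = (\<lambda>\<gamma>. (\<lambda>x. \<gamma> x * (\<Prod>i\<in>{2..k}. f i \<gamma> x) * \<beta> \<gamma> x)) ` primary_part (p 1) ` E"
proof -
  have inj1: "inj_on (primary_part (p 1)) E" using inj k by simp
  define h where "h = inv_into E (primary_part (p 1))"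
  have h: "bij_betw h (primary_part (p 1) ` E) E"
    unfolding h_def using bij_betw_inv_into[OF inj_on_imp_bij_betw[OF inj1]] .
  define f where "f i = primary_part (p i) \<circ> h" for i
  define \<beta> where "\<beta> = part_outside (p ` {1..k}) \<circ> h"
  have "\<forall>i\<in>{2..k}. bij_betw (f i) (primary_part (p 1) ` E) (primary_part (p i) ` E)"
    unfolding f_def using bij_betw_trans[OF h inj_on_imp_bij_betw] inj by force
  moreover have "\<forall>\<gamma>\<in>primary_part (p 1) ` E. \<beta> \<gamma> \<in> components_outside J (p ` {1..k})"
  proof
    fix \<gamma> assume "\<gamma> \<in> primary_part (p 1) ` E"
    then have "h \<gamma> \<in> big_group J" using bij_betwE[OF h] E by blast
    then show "\<beta> \<gamma> \<in> components_outside J (p ` {1..k})"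
      unfolding \<beta>_def by (simp add: part_outside_components_outside)
  qed
  moreover have "(\<lambda>x. primary_part (p 1) \<gamma> x * (\<Prod>i\<in>{2..k}. f i (primary_part (p 1) \<gamma>) x)
      * \<beta> (primary_part (p 1) \<gamma>) x) = \<gamma>" if "\<gamma> \<in> E" for \<gamma>
  proof
    fix x
    have "h (primary_part (p 1) \<gamma>) = \<gamma>" unfolding h_def using inv_into_f_f[OF inj1 that] .
    then show "primary_part (p 1) \<gamma> x * (\<Prod>i\<in>{2..k}. f i (primary_part (p 1) \<gamma>) x)
        * \<beta> (primary_part (p 1) \<gamma>) x = \<gamma> x"
      unfolding f_def \<beta>_def using primary_parts_decomposition[OF p k] by simp
  qed
  then have "E = (\<lambda>\<gamma>. (\<lambda>x. \<gamma> x * (\<Prod>i\<in>{2..k}. f i \<gamma> x) * \<beta> \<gamma> x)) ` primary_part (p 1) ` E"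
    by (simp add: image_image)
  ultimately show ?thesis by (rule that)
qed

theorem proposition3p5:
  fixes J :: "nat \<Rightarrow> 'j set"
    and \<Gamma>0 E :: "(nat \<times> 'j \<Rightarrow> complex) set"
    and p n :: "nat \<Rightarrow> nat" and k N :: nat
  assumes "is_subgroup J \<Gamma>0"
    and "k \<ge> 1"
    and "\<forall>i\<in>{1..k}. prime (p i) \<and> n i \<ge> 1"
    and "inj_on p {1..k}"
    and "N = (\<Prod>i=1..k. p i ^ n i)"
    and "PR N \<Gamma>0 E"
  shows "\<exists>Es f \<beta>.
           (\<forall>i\<in>{1..k}. PR (p i ^ n i) (prime_component J (p i)) (Es i)) \<and>
           (\<forall>i\<in>{2..k}. bij_betw (f i) (Es 1) (Es i)) \<and>
           (\<forall>\<gamma>\<in>Es 1. \<beta> \<gamma> \<in> components_outside J (p ` {1..k})) \<and>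
           E = (\<lambda>\<gamma>. (\<lambda>x. \<gamma> x * (\<Prod>i\<in>{2..k}. f i \<gamma> x) * \<beta> \<gamma> x)) ` Es 1"
proof -
  have PR_big: "PR N (big_group J) E" using PR_big_group assms(1,6) .
  have PR_i: "PR (p i ^ n i) (big_group J) E" if "i \<in> {1..k}" for i
  proof (rule PR_dvd[OF _ PR_big])
    show "p i ^ n i dvd N" unfolding assms(5) using that by (intro dvd_prodI) auto
  qed
  have "inj_on (primary_part (p i)) E" if i: "i \<in> {1..k}" for i
  proof (rule PR_inj_on_primary_part)
    have "n i \<noteq> 0" using assms(3) i by fastforce
    then have "p i dvd p i ^ n i" by simp
    then show "PR (p i) (big_group J) E" using PR_dvd[OF _ PR_i[OF i]] by blast
  qed (use assms(3) i in blast)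
  then have inj: "\<forall>i\<in>{1..k}. inj_on (primary_part (p i)) E" by blast
  have E: "E \<subseteq> big_group J" using PR_big unfolding PR_def by blast
  obtain f \<beta> where
    "\<forall>i\<in>{2..k}. bij_betw (f i) (primary_part (p 1) ` E) (primary_part (p i) ` E)"
    "\<forall>\<gamma>\<in>primary_part (p 1) ` E. \<beta> \<gamma> \<in> components_outside J (p ` {1..k})"
    "E = (\<lambda>\<gamma>. (\<lambda>x. \<gamma> x * (\<Prod>i\<in>{2..k}. f i \<gamma> x) * \<beta> \<gamma> x)) ` primary_part (p 1) ` E"
    by (rule parametrize_by_first_primary_part[OF E assms(4,2) inj])
  moreover have "\<forall>i\<in>{1..k}. PR (p i ^ n i) (prime_component J (p i)) (primary_part (p i) ` E)"
    using PR_primary_part_image PR_i assms(3) by blast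
  ultimately show ?thesis
    by (intro exI[of _ "\<lambda>i. primary_part (p i) ` E"] exI[of _ f] exI[of _ \<beta>] conjI)
qed

end
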